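(* Let $\mu>0$, $0<\tau^-<\tau^+$, let $k\ge0$ be an integer, and for $\gamma\in(0,\mu)$ let $\tau=\tau(\gamma)\in[\tau^-,\tau^+]$ and let $\omega_k=\omega_k(\gamma)$ satisfy $\omega_k\tau\in((2k+1)\pi,(2k+2)\pi)$. Let $$r_k(\gamma)=\frac{\omega_k^2+\gamma^2}{2\gamma(\gamma-\mu)}.$$ Then for $\gamma\in(0,\mu)$: (1) $|r_k(\gamma)|\ge 2(\omega_k/\mu)^2$; (2) $r_k(\gamma)\to-\infty$ as $\gamma\to0$ or $\gamma\to\mu$; (3) $|r_k(\gamma)|\le\dfrac{(2k+2)^2(\pi/\tau^-)^2+\gamma^2}{2\gamma(\mu-\gamma)}$.
   Context: In the paper, $\tau$ is the state-dependent delay $a/v(\xi)$ at a steady state $\xi$ for a decreasing velocity function $v$ with limiting values $v^->v^+>0$, so that $\tau\in(\tau^-,\tau^+)$ with $\tau^\pm=a/v^\pm$. *)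

theory Defs
  imports Complex_Main
begin

definition r_fun :: "real \<Rightarrow> real \<Rightarrow> real \<Rightarrow> real" where
  "r_fun \<mu> \<omega> \<gamma> = (\<omega>\<^sup>2 + \<gamma>\<^sup>2) / (2 * \<gamma> * (\<gamma> - \<mu>))"

end

theory Submission
  imports Defs "HOL-Real_Asymp.Real_Asymp"
begin

text \<open>For \<open>0 < \<gamma> < \<mu>\<close> the denominator \<open>2\<gamma>(\<gamma> - \<mu>)\<close> of \<open>r_fun\<close> is negative, so
  \<open>|r| = (\<omega>\<^sup>2 + \<gamma>\<^sup>2) / (2\<gamma>(\<mu> - \<gamma>))\<close>. Part (1) is then AM-GM, \<open>\<gamma>(\<mu> - \<gamma>) \<le> \<mu>\<^sup>2/4\<close>, and
  part (3) is the bound \<open>\<omega> < (2k+2)\<pi>/\<tau>\<^sup>-\<close>. For part (2), \<open>\<omega> > \<pi>/\<tau>\<^sup>+\<close> gives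
  \<open>r \<le> -(\<pi>/\<tau>\<^sup>+)\<^sup>2 / (2\<gamma>(\<mu> - \<gamma>))\<close>, and this bound tends to \<open>-\<infinity>\<close> at both ends of \<open>(0, \<mu>)\<close>.\<close>

lemma r_fun_eq_minus:
  assumes "0 < \<gamma>" "\<gamma> < \<mu>"
  shows "r_fun \<mu> \<omega> \<gamma> = - ((\<omega>\<^sup>2 + \<gamma>\<^sup>2) / (2 * \<gamma> * (\<mu> - \<gamma>)))"
proof -
  have "2 * \<gamma> * (\<gamma> - \<mu>) = - (2 * \<gamma> * (\<mu> - \<gamma>))" by algebra
  then show ?thesis unfolding r_fun_def by (simp only: divide_minus_right)
qed

lemma abs_r_fun:
  assumes "0 < \<gamma>" "\<gamma> < \<mu>"
  shows "\<bar>r_fun \<mu> \<omega> \<gamma>\<bar> = (\<omega>\<^sup>2 + \<gamma>\<^sup>2) / (2 * \<gamma> * (\<mu> - \<gamma>))"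
  using assms by (simp add: r_fun_eq_minus)

lemma mult_diff_le_quarter_square:
  fixes \<gamma> \<mu> :: real
  shows "\<gamma> * (\<mu> - \<gamma>) \<le> \<mu>\<^sup>2 / 4"
proof -
  have "\<mu>\<^sup>2 / 4 - \<gamma> * (\<mu> - \<gamma>) = (\<mu> - 2 * \<gamma>)\<^sup>2 / 4"
    by (simp add: power2_eq_square field_simps)
  then show ?thesis by (metis diff_ge_0_iff_ge zero_le_power2 divide_nonneg_pos zero_less_numeral)
qed

lemma abs_r_fun_ge:
  assumes "0 < \<gamma>" "\<gamma> < \<mu>"
  shows "2 * (\<omega> / \<mu>)\<^sup>2 \<le> \<bar>r_fun \<mu> \<omega> \<gamma>\<bar>"
proof -
  have den_pos: "0 < 2 * \<gamma> * (\<mu> - \<gamma>)" using assms by simp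
  have den_le: "2 * \<gamma> * (\<mu> - \<gamma>) \<le> \<mu>\<^sup>2 / 2"
    using mult_diff_le_quarter_square[of \<gamma> \<mu>] by simp
  have "0 < \<mu>\<^sup>2 / 2" using assms by simp
  have "2 * (\<omega> / \<mu>)\<^sup>2 = \<omega>\<^sup>2 / (\<mu>\<^sup>2 / 2)" by (simp add: power_divide)
  also have "\<dots> \<le> \<omega>\<^sup>2 / (2 * \<gamma> * (\<mu> - \<gamma>))"
    using mult_pos_pos[OF \<open>0 < \<mu>\<^sup>2 / 2\<close> den_pos] by (intro divide_left_mono[OF den_le]) auto
  also have "\<dots> \<le> (\<omega>\<^sup>2 + \<gamma>\<^sup>2) / (2 * \<gamma> * (\<mu> - \<gamma>))"
    using den_pos by (intro divide_right_mono) auto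
  finally show ?thesis using assms by (simp add: abs_r_fun)
qed

lemma abs_r_fun_le:
  assumes "0 < \<gamma>" "\<gamma> < \<mu>" "\<bar>\<omega>\<bar> \<le> W"
  shows "\<bar>r_fun \<mu> \<omega> \<gamma>\<bar> \<le> (W\<^sup>2 + \<gamma>\<^sup>2) / (2 * \<gamma> * (\<mu> - \<gamma>))"
proof -
  have "\<omega>\<^sup>2 \<le> W\<^sup>2" using assms(3) by (metis abs_le_square_iff abs_of_nonneg abs_ge_zero order_trans)
  then show ?thesis using assms(1,2) by (simp add: abs_r_fun divide_right_mono)
qed

lemma r_fun_le_bound:
  assumes "0 < \<gamma>" "\<gamma> < \<mu>" "c \<le> \<omega>\<^sup>2"
  shows "r_fun \<mu> \<omega> \<gamma> \<le> - c / (2 * \<gamma> * (\<mu> - \<gamma>))"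
proof -
  have "c / (2 * \<gamma> * (\<mu> - \<gamma>)) \<le> (\<omega>\<^sup>2 + \<gamma>\<^sup>2) / (2 * \<gamma> * (\<mu> - \<gamma>))"
    using assms by (intro divide_right_mono) (auto intro: add_increasing2)
  then show ?thesis using assms(1,2) by (simp add: r_fun_eq_minus)
qed

lemma filterlim_r_fun_at_bot:
  assumes "0 < \<mu>" "0 < c" and \<omega>_ge: "\<And>\<gamma>. 0 < \<gamma> \<Longrightarrow> \<gamma> < \<mu> \<Longrightarrow> c \<le> (\<omega> \<gamma>)\<^sup>2"
  shows "filterlim (\<lambda>\<gamma>. r_fun \<mu> (\<omega> \<gamma>) \<gamma>) at_bot (at_right 0)"
    and "filterlim (\<lambda>\<gamma>. r_fun \<mu> (\<omega> \<gamma>) \<gamma>) at_bot (at_left \<mu>)"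
proof -
  let ?bound = "\<lambda>\<gamma>. - c / (2 * \<gamma> * (\<mu> - \<gamma>))"
  have below: "eventually (\<lambda>\<gamma>. ?bound \<gamma> \<ge> r_fun \<mu> (\<omega> \<gamma>) \<gamma>) F"
    if "eventually (\<lambda>\<gamma>. 0 < \<gamma> \<and> \<gamma> < \<mu>) F" for F
    using that by eventually_elim (use \<omega>_ge r_fun_le_bound in blast)
  have "eventually (\<lambda>\<gamma>. 0 < \<gamma> \<and> \<gamma> < \<mu>) (at_right 0)"
    using eventually_at_right_real[OF assms(1)] by (simp add: eventually_at_right_field)
  moreover have "filterlim ?bound at_bot (at_right 0)"
    using assms(1,2) by real_asymp
  ultimately show "filterlim (\<lambda>\<gamma>. r_fun \<mu> (\<omega> \<gamma>) \<gamma>) at_bot (at_right 0)"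
    using below by (blast intro: filterlim_at_bot_mono)
  have "eventually (\<lambda>\<gamma>. 0 < \<gamma> \<and> \<gamma> < \<mu>) (at_left \<mu>)"
    using eventually_at_left_real[OF assms(1)] by simp
  moreover have "filterlim ?bound at_bot (at_left \<mu>)"
    using assms(1,2) by real_asymp
  ultimately show "filterlim (\<lambda>\<gamma>. r_fun \<mu> (\<omega> \<gamma>) \<gamma>) at_bot (at_left \<mu>)"
    using below by (blast intro: filterlim_at_bot_mono)
qed

lemma bounds_of_mult_between:
  fixes a b w t t\<^sub>l t\<^sub>u :: real
  assumes "0 < t\<^sub>l" "t\<^sub>l \<le> t" "t \<le> t\<^sub>u" "0 < a" "a < w * t" "w * t < b"
  shows "0 < w" and "a / t\<^sub>u < w" and "w < b / t\<^sub>l"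
proof -
  show "0 < w" using assms by (smt (verit) mult_nonpos_nonneg)
  then have "w * t\<^sub>l \<le> w * t" "w * t \<le> w * t\<^sub>u" using assms(2,3) by simp_all
  then show "a / t\<^sub>u < w" "w < b / t\<^sub>l" using assms by (simp_all add: field_simps)
qed

lemma frequency_bounds:
  fixes k :: nat
  assumes "0 < \<tau>\<^sub>l" "\<tau>\<^sub>l \<le> \<tau>" "\<tau> \<le> \<tau>\<^sub>u"
    and "(2 * real k + 1) * pi < \<omega> * \<tau>" "\<omega> * \<tau> < (2 * real k + 2) * pi"
  shows "pi / \<tau>\<^sub>u < \<omega>" and "\<bar>\<omega>\<bar> \<le> (2 * real k + 2) * pi / \<tau>\<^sub>l"
proof -
  note bounds = bounds_of_mult_between[OF assms(1-3) _ assms(4,5)]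
  have "pi / \<tau>\<^sub>u \<le> (2 * real k + 1) * pi / \<tau>\<^sub>u"
    using assms(1-3) by (simp add: divide_right_mono)
  with bounds show "pi / \<tau>\<^sub>u < \<omega>" "\<bar>\<omega>\<bar> \<le> (2 * real k + 2) * pi / \<tau>\<^sub>l"
    by simp_all
qed

theorem proposition5p5:
  fixes \<mu> tau_minus tau_plus :: real and k :: nat
    and \<tau> \<omega> :: "real \<Rightarrow> real"
  assumes "\<mu> > 0" and "0 < tau_minus" and "tau_minus < tau_plus"
    and tau_range: "\<And>\<gamma>. 0 < \<gamma> \<Longrightarrow> \<gamma> < \<mu> \<Longrightarrow> tau_minus \<le> \<tau> \<gamma> \<and> \<tau> \<gamma> \<le> tau_plus"
    and omega_range: "\<And>\<gamma>. 0 < \<gamma> \<Longrightarrow> \<gamma> < \<mu> \<Longrightarrow>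
        (2 * real k + 1) * pi < \<omega> \<gamma> * \<tau> \<gamma> \<and> \<omega> \<gamma> * \<tau> \<gamma> < (2 * real k + 2) * pi"
  shows "(\<forall>\<gamma>. 0 < \<gamma> \<and> \<gamma> < \<mu> \<longrightarrow> \<bar>r_fun \<mu> (\<omega> \<gamma>) \<gamma>\<bar> \<ge> 2 * (\<omega> \<gamma> / \<mu>)\<^sup>2)
    \<and> filterlim (\<lambda>\<gamma>. r_fun \<mu> (\<omega> \<gamma>) \<gamma>) at_bot (at_right 0)
    \<and> filterlim (\<lambda>\<gamma>. r_fun \<mu> (\<omega> \<gamma>) \<gamma>) at_bot (at_left \<mu>)
    \<and> (\<forall>\<gamma>. 0 < \<gamma> \<and> \<gamma> < \<mu> \<longrightarrow> \<bar>r_fun \<mu> (\<omega> \<gamma>) \<gamma>\<bar> \<le>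
          ((2 * real k + 2)\<^sup>2 * (pi / tau_minus)\<^sup>2 + \<gamma>\<^sup>2) / (2 * \<gamma> * (\<mu> - \<gamma>)))"
proof -
  have \<omega>_lower: "pi / tau_plus < \<omega> \<gamma>"
    and \<omega>_upper: "\<bar>\<omega> \<gamma>\<bar> \<le> (2 * real k + 2) * pi / tau_minus" if "0 < \<gamma>" "\<gamma> < \<mu>" for \<gamma>
    using frequency_bounds[OF assms(2), of "\<tau> \<gamma>"] tau_range[OF that] omega_range[OF that]
    by blast+
  have "(pi / tau_plus)\<^sup>2 \<le> (\<omega> \<gamma>)\<^sup>2" if "0 < \<gamma>" "\<gamma> < \<mu>" for \<gamma>
    using \<omega>_lower[OF that] assms(2,3) by (intro power_mono) auto
  then have limits: "filterlim (\<lambda>\<gamma>. r_fun \<mu> (\<omega> \<gamma>) \<gamma>) at_bot (at_right 0)"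
      "filterlim (\<lambda>\<gamma>. r_fun \<mu> (\<omega> \<gamma>) \<gamma>) at_bot (at_left \<mu>)"
    using filterlim_r_fun_at_bot[of \<mu> "(pi / tau_plus)\<^sup>2"] assms(1-3) by auto
  have "((2 * real k + 2) * pi / tau_minus)\<^sup>2 = (2 * real k + 2)\<^sup>2 * (pi / tau_minus)\<^sup>2"
    by (simp add: power_mult_distrib power_divide)
  then have "\<bar>r_fun \<mu> (\<omega> \<gamma>) \<gamma>\<bar> \<le>
      ((2 * real k + 2)\<^sup>2 * (pi / tau_minus)\<^sup>2 + \<gamma>\<^sup>2) / (2 * \<gamma> * (\<mu> - \<gamma>))"
    if "0 < \<gamma>" "\<gamma> < \<mu>" for \<gamma>
    using abs_r_fun_le[OF that \<omega>_upper[OF that]] by simp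
  then show ?thesis
    using abs_r_fun_ge limits by blast
qed

end
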